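(* Let $t$ be a normal $\lambda$-term, $v$ a closed $\lambda$-term, $\alpha,x$ variables, and $x_1,\dots,x_n$ ($n\ge0$) variables distinct from $\alpha$. If $t[\lambda x_1\dots\lambda x_n\alpha/x]\rightarrow_\beta v$, then $x\notin Fv(t)$.
   Context: $\lambda$-terms are those of the untyped $\lambda$-calculus; $Fv(t)$ is the set of free variables of $t$; a term is closed if it has no free variable; $t[u/x]$ is capture-avoiding substitution; $\rightarrow_\beta$ denotes $\beta$-reduction in zero or more steps; a term is normal if it contains no $\beta$-redex. *)

theory Defs
  imports Main
begin

text \<open>A variable index that is not bound by an enclosing Abs denotes a free variable:
  at binder depth k, Var i with i >= k denotes the free variable named i - k.\<close>

datatype dB = Var nat | App dB dB | Abs dB

primrec lift :: "dB \<Rightarrow> nat \<Rightarrow> dB" where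
  "lift (Var i) k = (if i < k then Var i else Var (Suc i))"
| "lift (App s t) k = App (lift s k) (lift t k)"
| "lift (Abs s) k = Abs (lift s (Suc k))"

primrec subst :: "dB \<Rightarrow> dB \<Rightarrow> nat \<Rightarrow> dB" where
  "subst (Var i) s k = (if k < i then Var (i - 1) else if i = k then s else Var i)"
| "subst (App t u) s k = App (subst t s k) (subst u s k)"
| "subst (Abs t) s k = Abs (subst t (lift s 0) (Suc k))"

inductive beta :: "dB \<Rightarrow> dB \<Rightarrow> bool" (infixl "\<rightarrow>\<^sub>\<beta>" 50) where
  beta: "App (Abs s) t \<rightarrow>\<^sub>\<beta> subst s t 0"
| appL: "s \<rightarrow>\<^sub>\<beta> t \<Longrightarrow> App s u \<rightarrow>\<^sub>\<beta> App t u"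
| appR: "s \<rightarrow>\<^sub>\<beta> t \<Longrightarrow> App u s \<rightarrow>\<^sub>\<beta> App u t"
| abs: "s \<rightarrow>\<^sub>\<beta> t \<Longrightarrow> Abs s \<rightarrow>\<^sub>\<beta> Abs t"

abbreviation beta_reds :: "dB \<Rightarrow> dB \<Rightarrow> bool" (infixl "\<rightarrow>\<^sub>\<beta>\<^sup>*" 50) where
  "s \<rightarrow>\<^sub>\<beta>\<^sup>* t \<equiv> beta\<^sup>*\<^sup>* s t"

primrec fv :: "dB \<Rightarrow> nat \<Rightarrow> nat set" where
  "fv (Var i) k = (if i < k then {} else {i - k})"
| "fv (App s t) k = fv s k \<union> fv t k"
| "fv (Abs t) k = fv t (Suc k)"

definition Fv :: "dB \<Rightarrow> nat set" where
  "Fv t = fv t 0"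

definition closed :: "dB \<Rightarrow> bool" where
  "closed t \<longleftrightarrow> Fv t = {}"

primrec has_redex :: "dB \<Rightarrow> bool" where
  "has_redex (Var i) = False"
| "has_redex (App s t) = ((\<exists>u. s = Abs u) \<or> has_redex s \<or> has_redex t)"
| "has_redex (Abs t) = has_redex t"

definition normal :: "dB \<Rightarrow> bool" where
  "normal t \<longleftrightarrow> \<not> has_redex t"

text \<open>Capture-avoiding substitution t[u/x] of the term u for the free variable x
  (no decrement of other variables).\<close>
primrec fsubst :: "dB \<Rightarrow> dB \<Rightarrow> nat \<Rightarrow> dB" where
  "fsubst (Var i) u x = (if i = x then u else Var i)"
| "fsubst (App s t) u x = App (fsubst s u x) (fsubst t u x)"
| "fsubst (Abs t) u x = Abs (fsubst t (lift u 0) (Suc x))"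

text \<open>The term \<lambda>x1...\<lambda>xn.\<alpha> with \<alpha> free (distinct from all xi).\<close>
definition lams_var :: "nat \<Rightarrow> nat \<Rightarrow> dB" where
  "lams_var n \<alpha> = (Abs ^^ n) (Var (\<alpha> + n))"

end

theory Submission
  imports Defs
begin

text \<open>If x has a free occurrence in the normal term t, follow it down: either it is the head
  variable of a subterm, and then after substitution that subterm has the free head variable
  \<alpha>, which no beta-reduction can remove; or it sits inside an abstraction or an argument of a
  neutral application whose head is not x, and substitution keeps that application neutral, so
  every reduct has the same shape and the occurrence is followed by induction. Either way
  \<alpha> is free in every reduct, which contradicts the closedness of v.\<close>

text \<open>The head variable is counted as a free variable, as in fv s 0: the index a is shifted under each binder.\<close>
inductive head_var :: "nat \<Rightarrow> dB \<Rightarrow> bool" where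
  Var: "head_var a (Var a)"
| App: "head_var a s \<Longrightarrow> head_var a (App s u)"
| Abs: "head_var (Suc a) s \<Longrightarrow> head_var a (Abs s)"

primrec neutral :: "dB \<Rightarrow> bool" where
  "neutral (Var i) = True"
| "neutral (App s u) = neutral s"
| "neutral (Abs s) = False"

primrec head :: "dB \<Rightarrow> dB" where
  "head (Var i) = Var i"
| "head (App s u) = head s"
| "head (Abs s) = Abs s"

lemma head_var_subst: "head_var a s \<Longrightarrow> k < a \<Longrightarrow> head_var (a - 1) (subst s t k)"
proof (induction a s arbitrary: k t rule: head_var.induct)
  case (Abs a s)
  then have "head_var (Suc (a - 1)) (subst s (lift t 0) (Suc k))" by simp
  then show ?case by (simp add: head_var.Abs)
qed (auto intro: head_var.intros)

lemma head_var_beta: "s \<rightarrow>\<^sub>\<beta> s' \<Longrightarrow> head_var a s \<Longrightarrow> head_var a s'"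
proof (induction s s' arbitrary: a rule: beta.induct)
  case (beta s t)
  then have "head_var (Suc a) s" by (auto elim: head_var.cases)
  from head_var_subst[OF this] show ?case by simp
qed (auto elim: head_var.cases intro: head_var.intros)

lemma head_var_beta_reds: "s \<rightarrow>\<^sub>\<beta>\<^sup>* s' \<Longrightarrow> head_var a s \<Longrightarrow> head_var a s'"
  by (induction rule: rtranclp_induct) (auto intro: head_var_beta)

lemma head_var_in_fv: "head_var a s \<Longrightarrow> k \<le> a \<Longrightarrow> a - k \<in> fv s k"
proof (induction a s arbitrary: k rule: head_var.induct)
  case (Abs a s)
  then have "Suc a - Suc k \<in> fv s (Suc k)" by (metis Suc_le_mono)
  then show ?case by simp
qed auto

lemma fv_Suc_iff: "x \<in> fv t (Suc k) \<longleftrightarrow> Suc x \<in> fv t k"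
  by (induction t arbitrary: k) auto

lemma lift_funpow_Abs: "lift ((Abs ^^ n) s) k = (Abs ^^ n) (lift s (k + n))"
  by (induction n arbitrary: k) auto

lemma lift_lams_var: "lift (lams_var n a) 0 = lams_var n (Suc a)"
  unfolding lams_var_def by (simp add: lift_funpow_Abs)

lemma head_var_funpow_Abs: "head_var (a + n) s \<Longrightarrow> head_var a ((Abs ^^ n) s)"
  by (induction n arbitrary: a) (auto intro: head_var.Abs)

lemma head_var_lams_var: "head_var a (lams_var n a)"
  unfolding lams_var_def by (rule head_var_funpow_Abs) (rule head_var.Var)

lemma head_var_fsubst_head:
  "head t = Var x \<Longrightarrow> head_var a (fsubst t (lams_var n a) x)"
  by (induction t) (auto intro: head_var_lams_var head_var.App)

lemma in_Fv_if_fsubst_head_beta_reds: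
  assumes "head t = Var x" and "fsubst t (lams_var n a) x \<rightarrow>\<^sub>\<beta>\<^sup>* v"
  shows "a \<in> Fv v"
proof -
  have "head_var a v"
    using head_var_beta_reds[OF assms(2) head_var_fsubst_head[OF assms(1)]] .
  from head_var_in_fv[OF this, of 0] show ?thesis by (simp add: Fv_def)
qed

lemma beta_reds_AbsE:
  assumes "Abs s \<rightarrow>\<^sub>\<beta>\<^sup>* w"
  obtains s' where "w = Abs s'" and "s \<rightarrow>\<^sub>\<beta>\<^sup>* s'"
  using assms
proof (induction arbitrary: thesis rule: rtranclp_induct)
  case (step y z)
  then obtain s' where y: "y = Abs s'" and reds: "s \<rightarrow>\<^sub>\<beta>\<^sup>* s'" by blast
  from step.hyps(2) obtain s'' where z: "z = Abs s''" and "s' \<rightarrow>\<^sub>\<beta> s''"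
    unfolding y by (cases rule: beta.cases) auto
  from reds this(2) have "s \<rightarrow>\<^sub>\<beta>\<^sup>* s''" by (rule rtranclp.rtrancl_into_rtrancl)
  with z show ?case by (rule step.prems)
qed auto

lemma neutral_beta: "s \<rightarrow>\<^sub>\<beta> s' \<Longrightarrow> neutral s \<Longrightarrow> neutral s'"
  by (induction rule: beta.induct) auto

lemma beta_reds_App_neutralE:
  assumes "App s u \<rightarrow>\<^sub>\<beta>\<^sup>* w" and "neutral s"
  obtains s' u' where "w = App s' u'" and "s \<rightarrow>\<^sub>\<beta>\<^sup>* s'" and "u \<rightarrow>\<^sub>\<beta>\<^sup>* u'" and "neutral s'"
  using assms
proof (induction arbitrary: thesis rule: rtranclp_induct)
  case (step y z)
  then obtain s' u' where y: "y = App s' u'" and reds: "s \<rightarrow>\<^sub>\<beta>\<^sup>* s'" "u \<rightarrow>\<^sub>\<beta>\<^sup>* u'"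
    and "neutral s'"
    by blast
  from step.hyps(2)[unfolded y] show ?case
  proof (cases rule: beta.cases)
    case beta
    with \<open>neutral s'\<close> show ?thesis by simp
  next
    case (appL s'')
    show ?thesis
    proof (rule step.prems)
      show "s \<rightarrow>\<^sub>\<beta>\<^sup>* s''" using reds(1) \<open>s' \<rightarrow>\<^sub>\<beta> s''\<close> by (rule rtranclp.rtrancl_into_rtrancl)
      show "neutral s''" using \<open>s' \<rightarrow>\<^sub>\<beta> s''\<close> \<open>neutral s'\<close> by (rule neutral_beta)
    qed (use appL reds in simp_all)
  next
    case (appR u'')
    show ?thesis
    proof (rule step.prems)
      show "u \<rightarrow>\<^sub>\<beta>\<^sup>* u''" using reds(2) \<open>u' \<rightarrow>\<^sub>\<beta> u''\<close> by (rule rtranclp.rtrancl_into_rtrancl)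
    qed (use appR reds \<open>neutral s'\<close> in simp_all)
  qed
qed auto

lemma neutral_if_normal_not_Abs: "normal t \<Longrightarrow> (\<And>u. t \<noteq> Abs u) \<Longrightarrow> neutral t"
  by (induction t) (auto simp: normal_def)

lemma neutral_fsubst: "neutral s \<Longrightarrow> head s \<noteq> Var x \<Longrightarrow> neutral (fsubst s L x)"
  by (induction s) auto

lemma in_Fv_if_fsubst_lams_var_beta_reds:
  assumes "normal t" and "x \<in> Fv t" and "fsubst t (lams_var n a) x \<rightarrow>\<^sub>\<beta>\<^sup>* v"
  shows "a \<in> Fv v"
  using assms
proof (induction t arbitrary: x a v)
  case (Var i)
  then have "head (Var i) = Var x" by (simp add: Fv_def)
  from in_Fv_if_fsubst_head_beta_reds[OF this Var.prems(3)] show ?case .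
next
  case (Abs t)
  then have "Abs (fsubst t (lams_var n (Suc a)) (Suc x)) \<rightarrow>\<^sub>\<beta>\<^sup>* v"
    by (simp add: lift_lams_var)
  then obtain s' where v: "v = Abs s'" and reds: "fsubst t (lams_var n (Suc a)) (Suc x) \<rightarrow>\<^sub>\<beta>\<^sup>* s'"
    by (rule beta_reds_AbsE)
  have "normal t" and "Suc x \<in> Fv t"
    using Abs.prems(1,2) by (simp_all add: normal_def Fv_def fv_Suc_iff)
  from Abs.IH[OF this reds] show ?case by (simp add: v Fv_def fv_Suc_iff)
next
  case (App s u)
  show ?case
  proof (cases "head s = Var x")
    case True
    then have "head (App s u) = Var x" by simp
    from in_Fv_if_fsubst_head_beta_reds[OF this App.prems(3)] show ?thesis .
  next
    case False
    have "normal s" "normal u" and "neutral s"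
      using App.prems(1) neutral_if_normal_not_Abs[of s] by (auto simp: normal_def)
    have "App (fsubst s (lams_var n a) x) (fsubst u (lams_var n a) x) \<rightarrow>\<^sub>\<beta>\<^sup>* v"
      using App.prems(3) by simp
    moreover have "neutral (fsubst s (lams_var n a) x)"
      using \<open>neutral s\<close> False by (rule neutral_fsubst)
    ultimately obtain s' u' where v: "v = App s' u'"
      and reds: "fsubst s (lams_var n a) x \<rightarrow>\<^sub>\<beta>\<^sup>* s'" "fsubst u (lams_var n a) x \<rightarrow>\<^sub>\<beta>\<^sup>* u'"
      by (rule beta_reds_App_neutralE)
    from App.prems(2) consider "x \<in> Fv s" | "x \<in> Fv u" by (auto simp: Fv_def)
    then show ?thesis
    proof cases
      case 1
      from App.IH(1)[OF \<open>normal s\<close> this reds(1)] show ?thesis by (simp add: v Fv_def)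
    next
      case 2
      from App.IH(2)[OF \<open>normal u\<close> this reds(2)] show ?thesis by (simp add: v Fv_def)
    qed
  qed
qed

theorem corollary2p1p3:
  fixes t v :: dB and \<alpha> x n :: nat
  assumes "normal t"
    and "closed v"
    and "fsubst t (lams_var n \<alpha>) x \<rightarrow>\<^sub>\<beta>\<^sup>* v"
  shows "x \<notin> Fv t"
proof
  assume "x \<in> Fv t"
  then have "\<alpha> \<in> Fv v" by (rule in_Fv_if_fsubst_lams_var_beta_reds[OF assms(1) _ assms(3)])
  with assms(2) show False by (simp add: closed_def)
qed

end
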